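(* Let $k\geq 2$ and let $a,b$ be positive integers with $a\geq k-1$ and $b\geq a-k+3$. Then the rooted $k$-hypergraph $\mathcal{T}=\mathcal{T}(a,b,k)$ (defined in the context) is balanced: for every nonempty set $S$ of non-root vertices of $\mathcal{T}$, $\frac{\epsilon(S)}{|S|}\geq \frac{b}{a}$, where $\epsilon(S)$ is the number of edges of $\mathcal{T}$ containing at least one vertex of $S$ (note $b/a=\epsilon(U-R)/|U-R|$ where $U-R$ is the set of all non-roots).
   Context: The rooted $k$-hypergraph $\mathcal{T}(a,b,k)$: its non-root vertices are $v_1,\dots,v_a$ (in this order); for $1\leq j\leq a-k+1$, $\{v_j,\dots,v_{j+k-1}\}$ is an edge. For $1\leq j\leq a-k+2$, call $\{v_j,\dots,v_{j+k-2}\}$ the $j$-th $(k-1)$-set. Its roots are $\rho_1,\dots,\rho_{b-a+k-1}$ (set $R$), and for each $i$ there is an edge consisting of $\rho_i$ together with the $m_i$-th $(k-1)$-set, where $m_i=\left\lfloor 1+\frac{(i-1)(a-k+2)}{b-a+k-2}\right\rfloor$ for $1\leq i\leq b-a+k-2$ and $m_{b-a+k-1}=a-k+2$. These are all the edges, so $\mathcal{T}$ has exactly $b$ edges. A rooted $k$-hypergraph with vertex set $U$ and root set $R$ is balanced if every nonempty $S\subseteq U-R$ satisfies $\epsilon(S)/|S|\geq \epsilon(U-R)/|U-R|$. *)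

theory Defs
  imports Complex_Main
begin

text \<open>Vertices of the rooted hypergraph T(a,b,k): non-roots V j (j = 1..a) and roots Rt i.\<close>
datatype vert = V nat | Rt nat

definition kset :: "nat \<Rightarrow> nat \<Rightarrow> vert set" where
  "kset k j = V ` {j..<j+k-1}"

text \<open>Number of roots: b - a + k - 1 (written to avoid truncated subtraction).\<close>
definition nroots :: "nat \<Rightarrow> nat \<Rightarrow> nat \<Rightarrow> nat" where
  "nroots a b k = b + k - a - 1"

definition mroot :: "nat \<Rightarrow> nat \<Rightarrow> nat \<Rightarrow> nat \<Rightarrow> nat" where
  "mroot a b k i = (if i = nroots a b k then a + 2 - k
                    else 1 + ((i - 1) * (a + 2 - k)) div (b + k - a - 2))"

definition edgesT :: "nat \<Rightarrow> nat \<Rightarrow> nat \<Rightarrow> vert set set" where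
  "edgesT a b k =
     {V ` {j..<j+k} | j. 1 \<le> j \<and> j \<le> a + 1 - k}
   \<union> {insert (Rt i) (kset k (mroot a b k i)) | i. 1 \<le> i \<and> i \<le> nroots a b k}"

definition eps :: "vert set set \<Rightarrow> vert set \<Rightarrow> nat" where
  "eps E S = card {e \<in> E. e \<inter> S \<noteq> {}}"

end

theory Submission
  imports Defs
begin

text \<open>Let T be the set of indices of non-roots outside S. An edge misses S exactly when all its
non-root vertices have indices in T, so \<open>\<epsilon>(S) = b - inner(T)\<close>, where inner(T) counts the edges
inside T, and it suffices to show \<open>a \<cdot> inner(T) \<le> b \<cdot> |T|\<close> for every proper \<open>T \<subseteq> {1..a}\<close>.
The non-root parts of edges are windows of consecutive indices, so a gap in T splits the count
and, by induction on |T|, only intervals remain. In an interval spanning L of the N = a - k + 2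
positions of (k-1)-sets there are L - 1 path edges, and the roots, whose positions
\<open>1 + \<lfloor>tN/q\<rfloor>\<close> (plus a last one at N) are spread with density q/N, contribute at most
1 + Lq/N edges. Comparing \<open>(L + Lq/N)/(L + k - 2)\<close> with \<open>(N + q)/(N + k - 2) = b/a\<close> finishes
the proof.\<close>

lemma finite_multiples_between:
  fixes N x y :: nat
  assumes "N > 0"
  shows "finite {t. x \<le> t * N \<and> t * N < y}"
proof (rule finite_subset)
  show "{t. x \<le> t * N \<and> t * N < y} \<subseteq> {..<y}"
    using assms by (auto simp: dual_order.strict_trans2)
qed simp

lemma card_multiples_between:
  fixes N x y :: nat
  assumes "N > 0" and "x < y + N"
  shows "card {t. x \<le> t * N \<and> t * N < y} * N + x < y + N"
proof (cases "{t. x \<le> t * N \<and> t * N < y} = {}")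
  case False
  define C where "C = {t. x \<le> t * N \<and> t * N < y}"
  have fin: "finite C" unfolding C_def using assms(1) by (rule finite_multiples_between)
  have ne: "C \<noteq> {}" using False unfolding C_def .
  have "card C \<le> card {Min C..Max C}"
    using fin by (intro card_mono) auto
  moreover have "Min C \<le> Max C" using fin ne by simp
  ultimately have "card C + Min C \<le> Max C + 1" by simp
  then have "card C * N + Min C * N \<le> Max C * N + N"
    using mult_le_mono1 by (metis add_mult_distrib mult_1)
  moreover have "x \<le> Min C * N" "Max C * N < y"
    using Min_in[OF fin ne] Max_in[OF fin ne] unfolding C_def by auto
  ultimately show ?thesis unfolding C_def by linarith
next
  case True
  then show ?thesis using assms(2) by (simp only: card.empty)
qed

lemma order_convex_eq_atLeastAtMost:
  fixes T :: "nat set"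
  assumes "finite T" "T \<noteq> {}"
    and convex: "\<And>x y z. y \<in> T \<Longrightarrow> z \<in> T \<Longrightarrow> y < x \<Longrightarrow> x < z \<Longrightarrow> x \<in> T"
  shows "T = {Min T..Max T}"
proof
  show "{Min T..Max T} \<subseteq> T"
  proof
    fix x assume "x \<in> {Min T..Max T}"
    with Min_in[OF assms(1,2)] Max_in[OF assms(1,2)] convex[of "Min T" "Max T" x]
    show "x \<in> T" by (cases "x = Min T \<or> x = Max T") auto
  qed
qed (use assms(1) in auto)

lemma ratio_add_le_ratio_add:
  fixes N K L q c :: nat
  assumes "N > 0" "L \<le> N" "c * N \<le> L * q"
  shows "(N + K) * (L + c) \<le> (N + q) * (L + K)"
proof -
  have "c * N \<le> q * N"
    using assms(2,3) by (metis mult.commute mult_le_mono1 order_trans)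
  then have "c \<le> q" using assms(1) by simp
  then have "K * c \<le> K * q" by simp
  moreover have "K * L \<le> K * N" using assms(2) by simp
  ultimately have "K * L + K * c + c * N \<le> K * N + K * q + L * q"
    using assms(3) by linarith
  then show ?thesis by (simp add: algebra_simps)
qed

lemma card_intervals_inside_split:
  fixes s e :: "'i \<Rightarrow> nat"
  assumes "finite J" and "x \<notin> T"
  shows "card {j \<in> J. {s j..<e j} \<subseteq> T}
    \<le> card {j \<in> J. {s j..<e j} \<subseteq> {t \<in> T. t < x}} + card {j \<in> J. {s j..<e j} \<subseteq> {t \<in> T. x < t}}"
proof -
  have "{s j..<e j} \<subseteq> {t \<in> T. t < x} \<or> {s j..<e j} \<subseteq> {t \<in> T. x < t}"
    if sub: "{s j..<e j} \<subseteq> T" for j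
  proof (cases "s j < x")
    case True
    have "w < x" if "w \<in> {s j..<e j}" for w
    proof (rule ccontr)
      assume "\<not> w < x"
      with that True have "x \<in> {s j..<e j}" by auto
      with sub assms(2) show False by blast
    qed
    then show ?thesis using sub by blast
  next
    case False
    have "x < w" if "w \<in> {s j..<e j}" for w
    proof -
      from that sub False have "w \<in> T" "x \<le> w" by auto
      with assms(2) show "x < w" by (cases "w = x") auto
    qed
    then show ?thesis using sub by blast
  qed
  then have "{j \<in> J. {s j..<e j} \<subseteq> T}
      \<subseteq> {j \<in> J. {s j..<e j} \<subseteq> {t \<in> T. t < x}} \<union> {j \<in> J. {s j..<e j} \<subseteq> {t \<in> T. x < t}}"
    by blast
  then have "card {j \<in> J. {s j..<e j} \<subseteq> T}
      \<le> card ({j \<in> J. {s j..<e j} \<subseteq> {t \<in> T. t < x}} \<union> {j \<in> J. {s j..<e j} \<subseteq> {t \<in> T. x < t}})"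
    using assms(1) by (intro card_mono) auto
  then show ?thesis using card_Un_le order_trans by blast
qed

text \<open>The edges whose non-root vertices all have indices in T, i.e. the edges missing
\<open>V ` ({1..a} - T)\<close>.\<close>
definition inner_edges :: "nat \<Rightarrow> nat \<Rightarrow> nat \<Rightarrow> nat set \<Rightarrow> nat" where
  "inner_edges a b k T =
     card {j \<in> {1..a+1-k}. {j..<j+k} \<subseteq> T}
   + card {i \<in> {1..nroots a b k}. {mroot a b k i..<mroot a b k i + k - 1} \<subseteq> T}"

lemma inner_edges_split:
  assumes "x \<notin> T"
  shows "inner_edges a b k T \<le> inner_edges a b k {t \<in> T. t < x} + inner_edges a b k {t \<in> T. x < t}"
  using card_intervals_inside_split[OF _ assms, of "{1..a+1-k}" "\<lambda>j. j" "\<lambda>j. j + k"]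
    card_intervals_inside_split[OF _ assms, of "{1..nroots a b k}" "mroot a b k" "\<lambda>i. mroot a b k i + k - 1"]
  unfolding inner_edges_def by simp

lemma inner_edges_le_if_split_le:
  assumes "finite T" "x \<notin> T"
    and "c * inner_edges a b k {t \<in> T. t < x} \<le> d * card {t \<in> T. t < x}"
    and "c * inner_edges a b k {t \<in> T. x < t} \<le> d * card {t \<in> T. x < t}"
  shows "c * inner_edges a b k T \<le> d * card T"
proof -
  have "c * inner_edges a b k T \<le> c * inner_edges a b k {t \<in> T. t < x} + c * inner_edges a b k {t \<in> T. x < t}"
    using inner_edges_split[OF assms(2)] by (simp flip: add_mult_distrib2)
  also have "\<dots> \<le> d * card {t \<in> T. t < x} + d * card {t \<in> T. x < t}"
    using assms(3,4) by (rule add_mono)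
  also have "\<dots> = d * card T"
  proof -
    have "T = {t \<in> T. t < x} \<union> {t \<in> T. x < t}" using assms(2) by (auto simp: not_less le_less)
    then have "card T = card {t \<in> T. t < x} + card {t \<in> T. x < t}"
      using assms(1)
      by (metis (no_types, lifting) card_Un_disjoint disjoint_iff finite_Un mem_Collect_eq
          not_less_iff_gr_or_eq)
    then show ?thesis by (simp add: add_mult_distrib2)
  qed
  finally show ?thesis .
qed

lemma card_meets_add_card_avoids:
  assumes "finite J" "\<And>j. j \<in> J \<Longrightarrow> W j \<subseteq> U"
  shows "card {j \<in> J. W j \<inter> A \<noteq> {}} + card {j \<in> J. W j \<subseteq> U - A} = card J"
proof -
  have "{j \<in> J. W j \<subseteq> U - A} = J - {j \<in> J. W j \<inter> A \<noteq> {}}" using assms(2) by auto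
  then show ?thesis using assms(1) by (simp add: card_Diff_subset card_mono)
qed

lemma eps_edgesT_image_V:
  assumes "0 < k"
  shows "eps (edgesT a b k) (V ` A)
    = card {j \<in> {1..a+1-k}. {j..<j+k} \<inter> A \<noteq> {}}
    + card {i \<in> {1..nroots a b k}. {mroot a b k i..<mroot a b k i + k - 1} \<inter> A \<noteq> {}}"
proof -
  define path root where "path j = V ` {j..<j+k}"
    and "root i = insert (Rt i) (V ` {mroot a b k i..<mroot a b k i + k - 1})" for j i
  define J I where "J = {j \<in> {1..a+1-k}. {j..<j+k} \<inter> A \<noteq> {}}"
    and "I = {i \<in> {1..nroots a b k}. {mroot a b k i..<mroot a b k i + k - 1} \<inter> A \<noteq> {}}"
  have "{e \<in> edgesT a b k. e \<inter> V ` A \<noteq> {}} = path ` J \<union> root ` I"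
    unfolding edgesT_def kset_def path_def root_def J_def I_def by auto
  moreover have "inj_on path J"
    using assms unfolding path_def by (intro inj_onI) (simp add: inj_image_eq_iff inj_def atLeastLessThan_eq_iff)
  moreover have "inj_on root I" unfolding root_def by (intro inj_onI) auto
  moreover have "path ` J \<inter> root ` I = {}" unfolding path_def root_def by auto
  ultimately show ?thesis
    unfolding eps_def J_def[symmetric] I_def[symmetric]
    by (simp add: card_Un_disjoint card_image J_def I_def)
qed

text \<open>N is the number of (k-1)-sets and q + 1 the number of roots.\<close>
locale T_hypergraph =
  fixes a b k N q :: nat
  assumes k_ge: "2 \<le> k" and a_eq: "a + 2 = N + k" and b_eq: "b = N + q"
    and N_pos: "0 < N" and q_pos: "0 < q"
begin

lemma nroots_eq: "nroots a b k = q + 1"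
  using a_eq b_eq k_ge unfolding nroots_def by simp

lemma mroot_last: "mroot a b k (q + 1) = N"
  using a_eq unfolding mroot_def nroots_eq by simp

lemma mroot_early: "i \<le> q \<Longrightarrow> mroot a b k i = 1 + (i - 1) * N div q"
  using a_eq b_eq unfolding mroot_def nroots_eq by simp

lemma mroot_bounds:
  assumes "1 \<le> i" "i \<le> q + 1"
  shows "1 \<le> mroot a b k i \<and> mroot a b k i \<le> N"
proof (cases "i = q + 1")
  case True
  then show ?thesis using mroot_last N_pos by simp
next
  case False
  then have "(i - 1) * N < q * N" using assms N_pos by simp
  then have "(i - 1) * N div q < N" using q_pos by (simp add: div_less_iff_less_mult)
  then show ?thesis using False assms mroot_early by simp
qed

lemma card_path_windows_inside:
  assumes "1 \<le> l" "u \<le> a + 1"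
  shows "card {j \<in> {1..a+1-k}. {j..<j+k} \<subseteq> {l..<u}} = u + 1 - k - l"
proof -
  have "{j \<in> {1..a+1-k}. {j..<j+k} \<subseteq> {l..<u}} = {l..<u+1-k}"
    using assms k_ge by auto
  then show ?thesis by simp
qed

lemma root_windows_inside_subset:
  assumes "1 \<le> l"
  shows "{i \<in> {1..nroots a b k}. {mroot a b k i..<mroot a b k i + k - 1} \<subseteq> {l..<u}}
    \<subseteq> Suc ` {t. t < q \<and> (l - 1) * q \<le> t * N \<and> t * N < (u + 1 - k) * q}
      \<union> (if a < u \<and> l \<le> N then {q + 1} else {})"
proof
  fix i
  assume "i \<in> {i \<in> {1..nroots a b k}. {mroot a b k i..<mroot a b k i + k - 1} \<subseteq> {l..<u}}"
  then have i: "1 \<le> i" "i \<le> q + 1" and inside: "l \<le> mroot a b k i" "mroot a b k i + k - 1 \<le> u"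
    using k_ge by (auto simp: nroots_eq)
  show "i \<in> Suc ` {t. t < q \<and> (l - 1) * q \<le> t * N \<and> t * N < (u + 1 - k) * q}
      \<union> (if a < u \<and> l \<le> N then {q + 1} else {})"
  proof (cases "i = q + 1")
    case True
    then show ?thesis using inside mroot_last a_eq by auto
  next
    case False
    define t where "t = i - 1"
    have t: "i = Suc t" "t < q" using i False unfolding t_def by auto
    have m: "mroot a b k i = 1 + t * N div q" using t mroot_early by simp
    have "l - 1 \<le> t * N div q" using inside m by simp
    then have "(l - 1) * q \<le> t * N div q * q" by simp
    also have "\<dots> \<le> t * N" by simp
    finally have "(l - 1) * q \<le> t * N" .
    moreover have "t * N < (u + 1 - k) * q"
      using inside m k_ge q_pos by (simp add: div_less_iff_less_mult[symmetric])
    ultimately show ?thesis using t by auto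
  qed
qed

lemma card_root_windows_inside_le:
  assumes "1 \<le> l"
  shows "card {i \<in> {1..nroots a b k}. {mroot a b k i..<mroot a b k i + k - 1} \<subseteq> {l..<u}}
    \<le> card {t. t < q \<and> (l - 1) * q \<le> t * N \<and> t * N < (u + 1 - k) * q}
      + (if a < u \<and> l \<le> N then 1 else 0)"
proof -
  let ?C = "{t. t < q \<and> (l - 1) * q \<le> t * N \<and> t * N < (u + 1 - k) * q}"
  have "finite ?C" by simp
  then have "card {i \<in> {1..nroots a b k}. {mroot a b k i..<mroot a b k i + k - 1} \<subseteq> {l..<u}}
      \<le> card (Suc ` ?C \<union> (if a < u \<and> l \<le> N then {q + 1} else {}))"
    by (intro card_mono root_windows_inside_subset assms) auto
  also have "\<dots> \<le> card ?C + (if a < u \<and> l \<le> N then 1 else 0)"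
    using \<open>finite ?C\<close> by (simp add: card_image card_insert_if)
  finally show ?thesis .
qed

lemma card_root_windows_inside:
  assumes "1 \<le> l" "l + k \<le> u + 1" "u \<le> a + 1" "\<not> (l = 1 \<and> u = a + 1)"
  shows "(card {i \<in> {1..nroots a b k}. {mroot a b k i..<mroot a b k i + k - 1} \<subseteq> {l..<u}} - 1) * N
    \<le> (u + 2 - k - l) * q"
proof -
  define R where "R = card {i \<in> {1..nroots a b k}. {mroot a b k i..<mroot a b k i + k - 1} \<subseteq> {l..<u}}"
  define C where "C = {t. t < q \<and> (l - 1) * q \<le> t * N \<and> t * N < (u + 1 - k) * q}"
  have R: "R \<le> card C + (if a < u \<and> l \<le> N then 1 else 0)"
    unfolding R_def C_def by (rule card_root_windows_inside_le[OF assms(1)])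
  show ?thesis
  proof (cases "u \<le> a")
    case True
    have xy: "(l - 1) * q \<le> (u + 1 - k) * q"
      using assms(2) by (intro mult_le_mono1) linarith
    have "C \<subseteq> {t. (l - 1) * q \<le> t * N \<and> t * N < (u + 1 - k) * q}"
      unfolding C_def by auto
    then have "card C * N \<le> card \<dots> * N"
      by (intro mult_le_mono1 card_mono[OF finite_multiples_between[OF N_pos]])
    moreover have "card {t. (l - 1) * q \<le> t * N \<and> t * N < (u + 1 - k) * q} * N + (l - 1) * q
        < (u + 1 - k) * q + N"
      using N_pos xy by (intro card_multiples_between) linarith+
    moreover have "(u + 1 - k) * q = (u + 2 - k - l) * q + (l - 1) * q"
      using assms(1,2) by (simp flip: add_mult_distrib)
    moreover have "R * N \<le> card C * N" using R True by simp
    ultimately have "R * N < (u + 2 - k - l) * q + N" by linarith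
    then show ?thesis unfolding R_def[symmetric] by (cases R) auto
  next
    case False
    then have u: "u = a + 1" using assms(3) by simp
    have lN: "l \<le> N" using assms(2) a_eq u by simp
    have "C \<subseteq> {t. (l - 1) * q \<le> t * N \<and> t * N < (q - 1) * N + 1}"
      unfolding C_def using q_pos by (auto simp: less_Suc_eq_le)
    then have "card C * N \<le> card \<dots> * N"
      by (intro mult_le_mono1 card_mono[OF finite_multiples_between[OF N_pos]])
    moreover have "(q - 1) * N + 1 + N = q * N + 1" using q_pos by (cases q) auto
    moreover have "(l - 1) * q \<le> q * N"
      using mult_le_mono1[of "l - 1" N q] lN by (simp only: mult.commute)
    ultimately have "card C * N + (l - 1) * q < q * N + 1"
      using card_multiples_between[OF N_pos, of "(l - 1) * q" "(q - 1) * N + 1"] by linarith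
    moreover have "q * N = (u + 2 - k - l) * q + (l - 1) * q"
    proof -
      have "N = (u + 2 - k - l) + (l - 1)" using u a_eq assms(1) lN by linarith
      then show ?thesis by (metis add_mult_distrib mult.commute)
    qed
    moreover have "(R - 1) * N \<le> card C * N" using R lN u by (intro mult_le_mono1) simp
    ultimately show ?thesis unfolding R_def[symmetric] by linarith
  qed
qed

lemma inner_edges_interval_le:
  assumes "1 \<le> l" "u \<le> a + 1" "\<not> (l = 1 \<and> u = a + 1)"
  shows "a * inner_edges a b k {l..<u} \<le> b * (u - l)"
proof (cases "l + k \<le> u + 1")
  case False
  then have "{i \<in> {1..nroots a b k}. {mroot a b k i..<mroot a b k i + k - 1} \<subseteq> {l..<u}} = {}"
    using k_ge by auto
  then have "inner_edges a b k {l..<u} = 0"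
    using False card_path_windows_inside[OF assms(1,2)] unfolding inner_edges_def by simp
  then show ?thesis by simp
next
  case True
  define R where "R = card {i \<in> {1..nroots a b k}. {mroot a b k i..<mroot a b k i + k - 1} \<subseteq> {l..<u}}"
  define L where "L = u + 2 - k - l"
  have "inner_edges a b k {l..<u} \<le> L + (R - 1)"
    using card_path_windows_inside[OF assms(1,2)] True unfolding inner_edges_def R_def[symmetric] L_def
    by linarith
  moreover have "(N + (k - 2)) * (L + (R - 1)) \<le> (N + q) * (L + (k - 2))"
  proof (rule ratio_add_le_ratio_add)
    show "L \<le> N" using assms a_eq unfolding L_def by linarith
    show "(R - 1) * N \<le> L * q"
      unfolding R_def L_def using card_root_windows_inside[OF assms(1) True assms(2,3)] .
  qed (fact N_pos)
  moreover have "N + (k - 2) = a" "L + (k - 2) = u - l"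
    using a_eq k_ge True unfolding L_def by linarith+
  ultimately show ?thesis using b_eq by (metis mult_le_mono2 order_trans)
qed

lemma inner_edges_le:
  assumes "T \<subseteq> {1..a}" "T \<noteq> {1..a}"
  shows "a * inner_edges a b k T \<le> b * card T"
  using assms
proof (induction "card T" arbitrary: T rule: less_induct)
  case less
  have fin: "finite T" using less.prems(1) finite_subset by blast
  consider (empty) "T = {}"
    | (gap) x y z where "x \<notin> T" "y \<in> T" "z \<in> T" "y < x" "x < z"
    | (convex) "T \<noteq> {}" "\<And>x y z. y \<in> T \<Longrightarrow> z \<in> T \<Longrightarrow> y < x \<Longrightarrow> x < z \<Longrightarrow> x \<in> T"
    by blast
  then show ?case
  proof cases
    case empty
    have "a * inner_edges a b k {1..<1} \<le> b * (1 - 1)"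
      using a_eq k_ge N_pos by (intro inner_edges_interval_le) auto
    then show ?thesis using empty by simp
  next
    case gap
    define T1 T2 where "T1 = {t \<in> T. t < x}" and "T2 = {t \<in> T. x < t}"
    have "z \<notin> T1" "y \<notin> T2" using gap(4,5) unfolding T1_def T2_def by auto
    then have "T1 \<subset> T" "T2 \<subset> T" using gap(2,3) unfolding T1_def T2_def by blast+
    then have "card T1 < card T" "card T2 < card T" using fin by (auto intro: psubset_card_mono)
    moreover have "T1 \<subseteq> {1..a}" "T1 \<noteq> {1..a}" "T2 \<subseteq> {1..a}" "T2 \<noteq> {1..a}"
      using \<open>T1 \<subset> T\<close> \<open>T2 \<subset> T\<close> less.prems by auto
    ultimately have "a * inner_edges a b k T1 \<le> b * card T1" "a * inner_edges a b k T2 \<le> b * card T2"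
      using less.hyps by blast+
    then show ?thesis
      unfolding T1_def T2_def by (rule inner_edges_le_if_split_le[OF fin gap(1)])
  next
    case convex
    define l h where "l = Min T" and "h = Suc (Max T)"
    have T: "T = {l..<h}"
      using order_convex_eq_atLeastAtMost[OF fin convex]
      unfolding l_def h_def atLeastLessThanSuc_atLeastAtMost .
    have "1 \<le> l" "h \<le> a + 1"
      using less.prems(1) Min_in[OF fin convex(1)] Max_in[OF fin convex(1)] unfolding l_def h_def by auto
    moreover have "\<not> (l = 1 \<and> h = a + 1)"
      using T less.prems(2) by (metis Suc_eq_plus1 atLeastLessThanSuc_atLeastAtMost)
    ultimately have "a * inner_edges a b k {l..<h} \<le> b * (h - l)"
      by (rule inner_edges_interval_le)
    then show ?thesis using T by simp
  qed
qed

lemma eps_add_inner_edges: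
  assumes "A \<subseteq> {1..a}"
  shows "eps (edgesT a b k) (V ` A) + inner_edges a b k ({1..a} - A) = b"
proof -
  have "card {j \<in> {1..a+1-k}. {j..<j+k} \<inter> A \<noteq> {}} + card {j \<in> {1..a+1-k}. {j..<j+k} \<subseteq> {1..a} - A}
      = card {1..a+1-k}"
    by (rule card_meets_add_card_avoids) auto
  moreover have "card {i \<in> {1..nroots a b k}. {mroot a b k i..<mroot a b k i + k - 1} \<inter> A \<noteq> {}}
      + card {i \<in> {1..nroots a b k}. {mroot a b k i..<mroot a b k i + k - 1} \<subseteq> {1..a} - A}
      = card {1..nroots a b k}"
  proof (rule card_meets_add_card_avoids)
    fix i assume "i \<in> {1..nroots a b k}"
    then have "1 \<le> mroot a b k i \<and> mroot a b k i \<le> N" using mroot_bounds nroots_eq by simp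
    then show "{mroot a b k i..<mroot a b k i + k - 1} \<subseteq> {1..a}" using a_eq by auto
  qed simp
  moreover have "card {1..a+1-k} + card {1..nroots a b k} = b"
    using a_eq b_eq k_ge N_pos nroots_eq by simp
  ultimately show ?thesis
    using eps_edgesT_image_V[of k a b A] k_ge unfolding inner_edges_def by simp
qed

end

theorem lemma3:
  fixes a b k :: nat and S :: "vert set"
  assumes "k \<ge> 2" "a > 0" "b > 0" "a \<ge> k - 1" "b + k \<ge> a + 3"
    and "S \<subseteq> V ` {1..a}" and "S \<noteq> {}"
  shows "real (eps (edgesT a b k) S) / real (card S) \<ge> real b / real a"
proof -
  interpret T_hypergraph a b k "a + 2 - k" "b + k - a - 2"
    using assms(1,4,5) by unfold_locales auto
  define A where "A = {n. V n \<in> S}"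
  have S: "S = V ` A" and A: "A \<subseteq> {1..a}" "A \<noteq> {}"
    using assms(6,7) unfolding A_def by auto
  have card_S: "card S = card A" unfolding S by (simp add: card_image inj_on_def)
  define R where "R = {1..a} - A"
  have "card A \<le> card {1..a}" using A(1) by (intro card_mono) auto
  then have split_a: "card A + card R = a"
    using A(1) unfolding R_def by (simp add: card_Diff_subset finite_subset)
  have split_b: "eps (edgesT a b k) S + inner_edges a b k R = b"
    unfolding S R_def using A(1) by (rule eps_add_inner_edges)
  have "a * inner_edges a b k R \<le> b * card R"
    using A unfolding R_def by (intro inner_edges_le) auto
  moreover have "b * card A + b * card R = a * eps (edgesT a b k) S + a * inner_edges a b k R"
    using split_a split_b by (metis add_mult_distrib2 mult.commute)
  ultimately have "b * card S \<le> a * eps (edgesT a b k) S" unfolding card_S by linarith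
  then have "real b * real (card S) \<le> real a * real (eps (edgesT a b k) S)"
    by (metis of_nat_le_iff of_nat_mult)
  moreover have "card S > 0" using A card_S by (simp add: card_gt_0_iff finite_subset)
  ultimately show ?thesis using assms(2) by (simp add: divide_simps mult.commute)
qed

end
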